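(* Let $C\in\mathbb{R}^{N\times N}$ be symmetric positive definite, let $\{1,\dots,N\}=\mathcal S\cup\mathcal S'$ be a partition into disjoint nonempty sets, and let $\Gamma\subset\mathbb{C}$ be a positively oriented simple closed contour with $\Gamma\subset\mathbb{C}\setminus(-\infty,0]$ whose interior contains the spectrum of $C$, and such that $\Gamma$ does not meet the spectra of $C$, $C_{\mathcal S}$, $C_{\mathcal S'}$. For $z\in\Gamma$ set $B(z):=zI-C_{\mathcal S}$, $D(z):=zI-C_{\mathcal S'}$, $H(z):=C_{\mathcal S\mathcal S'}D(z)^{-1}C_{\mathcal S'\mathcal S}$, \[ R_{\mathcal S}(z):=(zI-C_{\mathcal S})^{-1}-\big[(zI-C)^{-1}\big]_{\mathcal S},\qquad \Theta_\Gamma:=\sup_{z\in\Gamma}\|B(z)^{-1}H(z)\|. \] If $\Theta_\Gamma<1$, then for all $z\in\Gamma$, \[ \|R_{\mathcal S}(z)\|\le\frac{\|C_{\mathcal S\mathcal S'}\|^2}{1-\Theta_\Gamma}\,\|B(z)^{-1}\|^2\,\|D(z)^{-1}\|. \]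
   Context: $\|\cdot\|$ is the spectral norm (on complex matrices). $C_{\mathcal S}$, $C_{\mathcal S'}$ are principal submatrices of $C$ on $\mathcal S,\mathcal S'$; $C_{\mathcal S\mathcal S'}$ (resp. $C_{\mathcal S'\mathcal S}$) is the off-diagonal block with rows in $\mathcal S$ and columns in $\mathcal S'$ (resp. vice versa); $[M]_{\mathcal S}$ is the principal submatrix of $M$ on $\mathcal S$. *)

theory Defs
  imports "HOL-Complex_Analysis.Complex_Analysis" "Jordan_Normal_Form.DL_Submatrix"
          "Jordan_Normal_Form.Gauss_Jordan_Elimination" "Jordan_Normal_Form.Char_Poly"
begin

definition cvec_norm :: "complex vec \<Rightarrow> real" where
  "cvec_norm v = sqrt (\<Sum>i<dim_vec v. (cmod (v $ i))\<^sup>2)"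

definition spec_norm :: "complex mat \<Rightarrow> real" where
  "spec_norm A = Sup {cvec_norm (A *\<^sub>v v) | v. v \<in> carrier_vec (dim_col A) \<and> cvec_norm v \<le> 1}"

text \<open>Matrix inverse (used only for invertible square matrices).\<close>
definition minv :: "complex mat \<Rightarrow> complex mat" where
  "minv A = the (mat_inverse A)"

definition spd :: "nat \<Rightarrow> real mat \<Rightarrow> bool" where
  "spd N C \<longleftrightarrow> C \<in> carrier_mat N N \<and> transpose_mat C = C \<and>
     (\<forall>v \<in> carrier_vec N. v \<noteq> 0\<^sub>v N \<longrightarrow> v \<bullet> (C *\<^sub>v v) > 0)"

definition cmat :: "real mat \<Rightarrow> complex mat" where
  "cmat C = map_mat complex_of_real C"

definition psub :: "'a mat \<Rightarrow> nat set \<Rightarrow> 'a mat" where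
  "psub A S = submatrix A S S"

end

theory Submission
  imports Defs
begin

(*
  Write W = (zI - C)^-1, B = zI - C_S, D = zI - C_S', X = C_SS' and Y = C_S'S. The columns S of
  (zI - C) W = I give B W_S - X W_S'S = I and D W_S'S = Y W_S; eliminating W_S'S yields the
  fixed-point equation [W]_S = B^-1 + K [W]_S with K = B^-1 X D^-1 Y = B^-1 H. Hence
  R_S = -K [W]_S, and ||K|| <= Theta < 1 gives ||[W]_S|| <= ||B^-1|| / (1 - Theta), while
  ||K|| <= ||B^-1|| ||X||^2 ||D^-1|| because Y = X^* for symmetric C. Theta is a genuine
  supremum because the resolvents depend continuously on z along the compact contour.
*)

section \<open>Vector and spectral norms\<close>

lemma cvec_norm_L2: "cvec_norm v = L2_set (\<lambda>i. cmod (v $ i)) {..<dim_vec v}"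
  by (simp add: cvec_norm_def L2_set_def)

lemma cvec_norm_nonneg: "0 \<le> cvec_norm v"
  by (simp add: cvec_norm_L2)

lemma cvec_norm_zero_vec [simp]: "cvec_norm (0\<^sub>v n) = 0"
  by (simp add: cvec_norm_def)

lemma cvec_norm_entry_le: "i < dim_vec v \<Longrightarrow> cmod (v $ i) \<le> cvec_norm v"
  unfolding cvec_norm_L2 by (rule member_le_L2_set) auto

lemma cvec_norm_power2: "(cvec_norm v)\<^sup>2 = (\<Sum>i<dim_vec v. (cmod (v $ i))\<^sup>2)"
  by (simp add: cvec_norm_def sum_nonneg)

lemma cvec_norm_add_le:
  assumes "dim_vec w = dim_vec v"
  shows "cvec_norm (v + w) \<le> cvec_norm v + cvec_norm w"
proof -
  have "cvec_norm (v + w) = L2_set (\<lambda>i. cmod (v $ i + w $ i)) {..<dim_vec v}"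
    unfolding cvec_norm_L2 using assms by (intro L2_set_cong) auto
  also have "\<dots> \<le> L2_set (\<lambda>i. cmod (v $ i) + cmod (w $ i)) {..<dim_vec v}"
    by (intro L2_set_mono) (auto intro: norm_triangle_ineq)
  also have "\<dots> \<le> cvec_norm v + cvec_norm w"
    unfolding cvec_norm_L2 using assms by (simp add: L2_set_triangle_ineq)
  finally show ?thesis .
qed

lemma cvec_norm_smult: "cvec_norm (c \<cdot>\<^sub>v v) = cmod c * cvec_norm v"
  unfolding cvec_norm_L2 by (simp add: L2_set_right_distrib, intro L2_set_cong) (auto simp: norm_mult)

lemma cvec_norm_uminus: "cvec_norm (- v) = cvec_norm v"
  unfolding cvec_norm_L2 by (simp, intro L2_set_cong) auto

lemma cvec_norm_mult_vec_le_entry_sum: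
  assumes v: "v \<in> carrier_vec (dim_col A)"
  shows "cvec_norm (A *\<^sub>v v) \<le> (\<Sum>i<dim_row A. \<Sum>j<dim_col A. cmod (A $$ (i,j))) * cvec_norm v"
proof -
  have "cvec_norm (A *\<^sub>v v) \<le> (\<Sum>i<dim_row A. cmod ((A *\<^sub>v v) $ i))"
    unfolding cvec_norm_L2 dim_mult_mat_vec by (rule L2_set_le_sum) simp
  also have "\<dots> \<le> (\<Sum>i<dim_row A. \<Sum>j<dim_col A. cmod (A $$ (i,j)) * cvec_norm v)"
  proof (rule sum_mono)
    fix i assume i: "i \<in> {..<dim_row A}"
    have "cmod ((A *\<^sub>v v) $ i) = cmod (\<Sum>j<dim_col A. A $$ (i,j) * v $ j)"
      using i v by (simp add: scalar_prod_def atLeast0LessThan)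
    also have "\<dots> \<le> (\<Sum>j<dim_col A. cmod (A $$ (i,j)) * cmod (v $ j))"
      by (rule order_trans[OF norm_sum]) (simp add: norm_mult)
    also have "\<dots> \<le> (\<Sum>j<dim_col A. cmod (A $$ (i,j)) * cvec_norm v)"
      using v by (intro sum_mono mult_left_mono cvec_norm_entry_le) auto
    finally show "cmod ((A *\<^sub>v v) $ i) \<le> (\<Sum>j<dim_col A. cmod (A $$ (i,j)) * cvec_norm v)" .
  qed
  also have "\<dots> = (\<Sum>i<dim_row A. \<Sum>j<dim_col A. cmod (A $$ (i,j))) * cvec_norm v"
    by (simp add: sum_distrib_right)
  finally show ?thesis .
qed

lemma spec_norm_bdd_above:
  "bdd_above {cvec_norm (A *\<^sub>v v) | v. v \<in> carrier_vec (dim_col A) \<and> cvec_norm v \<le> 1}"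
proof (rule bdd_aboveI)
  fix x assume "x \<in> {cvec_norm (A *\<^sub>v v) | v. v \<in> carrier_vec (dim_col A) \<and> cvec_norm v \<le> 1}"
  then obtain v where v: "v \<in> carrier_vec (dim_col A)" "cvec_norm v \<le> 1" and x: "x = cvec_norm (A *\<^sub>v v)"
    by auto
  have "0 \<le> (\<Sum>i<dim_row A. \<Sum>j<dim_col A. cmod (A $$ (i,j)))"
    by (intro sum_nonneg) auto
  then show "x \<le> (\<Sum>i<dim_row A. \<Sum>j<dim_col A. cmod (A $$ (i,j)))"
    using cvec_norm_mult_vec_le_entry_sum[OF v(1)] mult_left_le[OF v(2)] x by fastforce
qed

lemma spec_norm_upper:
  assumes "v \<in> carrier_vec (dim_col A)" "cvec_norm v \<le> 1"
  shows "cvec_norm (A *\<^sub>v v) \<le> spec_norm A"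
  unfolding spec_norm_def by (rule cSup_upper[OF _ spec_norm_bdd_above]) (use assms in auto)

lemma spec_norm_nonneg: "0 \<le> spec_norm A"
  using spec_norm_upper[of "0\<^sub>v (dim_col A)" A] cvec_norm_nonneg[of "A *\<^sub>v 0\<^sub>v (dim_col A)"] by simp

lemma spec_norm_least:
  assumes "0 \<le> c" and bound: "\<And>v. v \<in> carrier_vec (dim_col A) \<Longrightarrow> cvec_norm (A *\<^sub>v v) \<le> c * cvec_norm v"
  shows "spec_norm A \<le> c"
  unfolding spec_norm_def
proof (rule cSup_least)
  show "{cvec_norm (A *\<^sub>v v) | v. v \<in> carrier_vec (dim_col A) \<and> cvec_norm v \<le> 1} \<noteq> {}"
    by (auto intro!: exI[of _ "0\<^sub>v (dim_col A)"])
  fix x assume "x \<in> {cvec_norm (A *\<^sub>v v) | v. v \<in> carrier_vec (dim_col A) \<and> cvec_norm v \<le> 1}"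
  then obtain v where v: "v \<in> carrier_vec (dim_col A)" "cvec_norm v \<le> 1" and x: "x = cvec_norm (A *\<^sub>v v)"
    by auto
  show "x \<le> c"
    using bound[OF v(1)] mult_left_le[OF v(2) \<open>0 \<le> c\<close>] x by linarith
qed

lemma spec_norm_mult_vec:
  assumes v: "v \<in> carrier_vec (dim_col A)"
  shows "cvec_norm (A *\<^sub>v v) \<le> spec_norm A * cvec_norm v"
proof (cases "cvec_norm v = 0")
  case True
  then have "v = 0\<^sub>v (dim_col A)"
    using v cvec_norm_entry_le[of _ v] by (intro eq_vecI) auto
  moreover have "A *\<^sub>v 0\<^sub>v (dim_col A) = 0\<^sub>v (dim_row A)"
    by (rule eq_vecI) auto
  ultimately show ?thesis by simp
next
  case False
  define r where "r = cvec_norm v"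
  have r: "r > 0" using False cvec_norm_nonneg[of v] r_def by simp
  have "cvec_norm (A *\<^sub>v v) / r = cvec_norm (A *\<^sub>v (complex_of_real (1 / r) \<cdot>\<^sub>v v))"
    using r by (simp add: mult_mat_vec[OF carrier_matI[OF refl refl] v] cvec_norm_smult norm_divide)
  also have "\<dots> \<le> spec_norm A"
    using v r by (intro spec_norm_upper) (auto simp: cvec_norm_smult r_def norm_divide)
  finally show ?thesis using r by (simp add: r_def divide_le_eq mult.commute)
qed

lemma spec_norm_le_entry_sum: "spec_norm A \<le> (\<Sum>i<dim_row A. \<Sum>j<dim_col A. cmod (A $$ (i,j)))"
  by (rule spec_norm_least[OF _ cvec_norm_mult_vec_le_entry_sum]) (auto intro!: sum_nonneg)

lemma spec_norm_mult:
  assumes A: "A \<in> carrier_mat n m" and B: "B \<in> carrier_mat m k"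
  shows "spec_norm (A * B) \<le> spec_norm A * spec_norm B"
proof (rule spec_norm_least)
  show "0 \<le> spec_norm A * spec_norm B" by (simp add: spec_norm_nonneg)
  fix v :: "complex vec" assume "v \<in> carrier_vec (dim_col (A * B))"
  then have v: "v \<in> carrier_vec k" using B by simp
  have "cvec_norm ((A * B) *\<^sub>v v) = cvec_norm (A *\<^sub>v (B *\<^sub>v v))" using A B v by simp
  also have "\<dots> \<le> spec_norm A * cvec_norm (B *\<^sub>v v)"
    using A B v by (intro spec_norm_mult_vec) auto
  also have "\<dots> \<le> spec_norm A * (spec_norm B * cvec_norm v)"
    using B v by (intro mult_left_mono spec_norm_mult_vec spec_norm_nonneg) auto
  finally show "cvec_norm ((A * B) *\<^sub>v v) \<le> spec_norm A * spec_norm B * cvec_norm v"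
    by (simp add: mult.assoc)
qed

lemma spec_norm_add:
  assumes A: "A \<in> carrier_mat n m" and B: "B \<in> carrier_mat n m"
  shows "spec_norm (A + B) \<le> spec_norm A + spec_norm B"
proof (rule spec_norm_least)
  show "0 \<le> spec_norm A + spec_norm B" by (simp add: spec_norm_nonneg)
  fix v :: "complex vec" assume "v \<in> carrier_vec (dim_col (A + B))"
  then have v: "v \<in> carrier_vec m" using B by simp
  have "cvec_norm ((A + B) *\<^sub>v v) = cvec_norm (A *\<^sub>v v + B *\<^sub>v v)"
    using A B v by (simp add: add_mult_distrib_mat_vec)
  also have "\<dots> \<le> cvec_norm (A *\<^sub>v v) + cvec_norm (B *\<^sub>v v)"
    using A B by (intro cvec_norm_add_le) simp
  also have "\<dots> \<le> spec_norm A * cvec_norm v + spec_norm B * cvec_norm v"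
    using A B v by (intro add_mono spec_norm_mult_vec) auto
  finally show "cvec_norm ((A + B) *\<^sub>v v) \<le> (spec_norm A + spec_norm B) * cvec_norm v"
    by (simp add: distrib_right)
qed

lemma spec_norm_uminus: "spec_norm (- A) = spec_norm A"
proof -
  have le: "spec_norm (- B) \<le> spec_norm B" for B
    by (intro spec_norm_least spec_norm_nonneg) (simp add: cvec_norm_uminus spec_norm_mult_vec)
  show ?thesis using le[of A] le[of "- A"] by simp
qed

lemma spec_norm_conj_transpose_le:
  assumes X: "X \<in> carrier_mat n m" and Y: "Y \<in> carrier_mat m n"
    and XY: "\<And>i j. i < n \<Longrightarrow> j < m \<Longrightarrow> Y $$ (j, i) = cnj (X $$ (i, j))"
  shows "spec_norm Y \<le> spec_norm X"
proof (rule spec_norm_least[OF spec_norm_nonneg])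
  fix w :: "complex vec" assume "w \<in> carrier_vec (dim_col Y)"
  then have w: "w \<in> carrier_vec n" using Y by simp
  define u where "u = Y *\<^sub>v w"
  define v where "v = X *\<^sub>v u"
  have u: "u \<in> carrier_vec m" and v: "v \<in> carrier_vec n"
    using X Y w by (simp_all add: u_def v_def)
  have u_index: "u $ j = (\<Sum>i<n. Y $$ (j,i) * w $ i)" if "j < m" for j
    using that Y w unfolding u_def by (simp add: scalar_prod_def atLeast0LessThan)
  have v_index: "v $ i = (\<Sum>j<m. X $$ (i,j) * u $ j)" if "i < n" for i
    using that X u unfolding v_def by (simp add: scalar_prod_def atLeast0LessThan)
  \<comment> \<open>\<open>\<parallel>u\<parallel>\<^sup>2 = \<langle>Y w, u\<rangle> = \<langle>w, X u\<rangle>\<close>, then Cauchy-Schwarz\<close>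
  have "complex_of_real ((cvec_norm u)\<^sup>2) = (\<Sum>j<m. cnj (u $ j) * u $ j)"
    unfolding cvec_norm_power2 of_real_sum using u
    by (intro sum.cong) (auto simp del: of_real_power simp: complex_norm_square mult.commute)
  also have "\<dots> = (\<Sum>j<m. \<Sum>i<n. cnj (u $ j) * (Y $$ (j,i) * w $ i))"
    by (intro sum.cong refl) (simp add: u_index sum_distrib_left)
  also have "\<dots> = (\<Sum>i<n. \<Sum>j<m. cnj (u $ j) * (Y $$ (j,i) * w $ i))"
    by (rule sum.swap)
  also have "\<dots> = (\<Sum>i<n. w $ i * cnj (v $ i))"
    by (intro sum.cong refl) (simp add: v_index XY sum_distrib_left mult_ac)
  finally have inner: "complex_of_real ((cvec_norm u)\<^sup>2) = (\<Sum>i<n. w $ i * cnj (v $ i))" .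
  have "(cvec_norm u)\<^sup>2 = cmod (\<Sum>i<n. w $ i * cnj (v $ i))"
    unfolding inner[symmetric] norm_of_real by simp
  also have "\<dots> \<le> (\<Sum>i<n. cmod (w $ i) * cmod (v $ i))"
    by (rule order_trans[OF norm_sum]) (simp add: norm_mult)
  also have "\<dots> \<le> cvec_norm w * cvec_norm v"
    unfolding cvec_norm_L2 using w v L2_set_mult_ineq[of "\<lambda>i. cmod (w $ i)" "\<lambda>i. cmod (v $ i)" "{..<n}"]
    by simp
  also have "\<dots> \<le> cvec_norm w * (spec_norm X * cvec_norm u)"
    unfolding v_def using X u by (intro mult_left_mono spec_norm_mult_vec cvec_norm_nonneg) simp
  finally have "cvec_norm u * cvec_norm u \<le> (spec_norm X * cvec_norm w) * cvec_norm u"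
    by (simp add: power2_eq_square mult_ac)
  then show "cvec_norm (Y *\<^sub>v w) \<le> spec_norm X * cvec_norm w"
    using cvec_norm_nonneg[of u] spec_norm_nonneg[of X] cvec_norm_nonneg[of w]
    unfolding u_def by (cases "cvec_norm (Y *\<^sub>v w) = 0") (auto simp: mult_le_cancel_right)
qed

section \<open>Submatrices\<close>

lemma pick_bij_betw:
  assumes "finite I"
  shows "bij_betw (pick I) {..<card I} I"
proof -
  have inj: "inj_on (pick I) {..<card I}"
    by (rule strict_mono_on_imp_inj_on) (simp add: strict_mono_on_def pick_mono)
  have "pick I ` {..<card I} \<subseteq> I"
    using pick_in_set by blast
  moreover have "card (pick I ` {..<card I}) = card I"
    using card_image[OF inj] by simp
  ultimately have "pick I ` {..<card I} = I"
    using card_subset_eq[OF assms] by blast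
  then show ?thesis
    using inj by (simp add: bij_betw_def)
qed

lemma sum_pick: "finite I \<Longrightarrow> (\<Sum>a<card I. f (pick I a)) = (\<Sum>i\<in>I. f i)"
  using sum.reindex_bij_betw[OF pick_bij_betw] by blast

lemma pick_less:
  assumes "I \<subseteq> {0..<N}" "a < card I"
  shows "pick I a < N"
  using assms pick_in_set[of a I] by auto

lemma pick_eq_pick_iff:
  assumes "I \<subseteq> {0..<N}" "a < card I" "b < card I"
  shows "pick I a = pick I b \<longleftrightarrow> a = b"
  using inj_on_eq_iff[OF bij_betw_imp_inj_on[OF pick_bij_betw[OF finite_subset[OF assms(1)]]]] assms(2,3)
  by simp

lemma submatrix_carrier_mat:
  assumes "M \<in> carrier_mat m n" "I \<subseteq> {0..<m}" "J \<subseteq> {0..<n}"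
  shows "submatrix M I J \<in> carrier_mat (card I) (card J)"
proof -
  have "{i. i < m \<and> i \<in> I} = I" "{j. j < n \<and> j \<in> J} = J"
    using assms(2,3) by auto
  then show ?thesis
    using assms(1) unfolding carrier_mat_def by (simp add: dim_submatrix)
qed

lemma submatrix_index_pick:
  assumes "M \<in> carrier_mat m n" "I \<subseteq> {0..<m}" "J \<subseteq> {0..<n}" "a < card I" "b < card J"
  shows "submatrix M I J $$ (a,b) = M $$ (pick I a, pick J b)"
proof -
  have "{i. i < m \<and> i \<in> I} = I" "{j. j < n \<and> j \<in> J} = J"
    using assms(2,3) by auto
  then show ?thesis
    using assms by (intro submatrix_index) auto
qed

lemma index_submatrix_mult:
  assumes M: "M \<in> carrier_mat m N" and W: "W \<in> carrier_mat N n"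
    and I: "I \<subseteq> {0..<m}" and L: "L \<subseteq> {0..<N}" and J: "J \<subseteq> {0..<n}"
    and a: "a < card I" and b: "b < card J"
  shows "(submatrix M I L * submatrix W L J) $$ (a,b)
    = (\<Sum>k\<in>L. M $$ (pick I a, k) * W $$ (k, pick J b))"
proof -
  have "(submatrix M I L * submatrix W L J) $$ (a,b)
    = (\<Sum>k<card L. submatrix M I L $$ (a,k) * submatrix W L J $$ (k,b))"
    using submatrix_carrier_mat[OF M I L] submatrix_carrier_mat[OF W L J] a b
    by (simp add: scalar_prod_def atLeast0LessThan)
  also have "\<dots> = (\<Sum>k<card L. M $$ (pick I a, pick L k) * W $$ (pick L k, pick J b))"
    using submatrix_index_pick[OF M I L a] submatrix_index_pick[OF W L J _ b] by simp
  also have "\<dots> = (\<Sum>k\<in>L. M $$ (pick I a, k) * W $$ (k, pick J b))"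
    using finite_subset[OF L] by (intro sum_pick) simp
  finally show ?thesis .
qed

lemma submatrix_mult_split:
  fixes M W :: "'a :: comm_semiring_0 mat"
  assumes M: "M \<in> carrier_mat m N" and W: "W \<in> carrier_mat N n"
    and part: "K \<union> K' = {0..<N}" "K \<inter> K' = {}"
    and I: "I \<subseteq> {0..<m}" and J: "J \<subseteq> {0..<n}"
  shows "submatrix (M * W) I J
    = submatrix M I K * submatrix W K J + submatrix M I K' * submatrix W K' J"
proof -
  have K: "K \<subseteq> {0..<N}" "K' \<subseteq> {0..<N}"
    using part by auto
  have MW: "M * W \<in> carrier_mat m n"
    using M W by simp
  note carriers = submatrix_carrier_mat[OF MW I J]
    submatrix_carrier_mat[OF M I K(1)] submatrix_carrier_mat[OF W K(1) J]
    submatrix_carrier_mat[OF M I K(2)] submatrix_carrier_mat[OF W K(2) J]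
  have "submatrix (M * W) I J $$ (a,b)
    = (submatrix M I K * submatrix W K J + submatrix M I K' * submatrix W K' J) $$ (a,b)"
    if a: "a < card I" and b: "b < card J" for a b
  proof -
    have "submatrix (M * W) I J $$ (a,b) = (\<Sum>k\<in>{0..<N}. M $$ (pick I a, k) * W $$ (k, pick J b))"
      using submatrix_index_pick[OF MW I J a b] pick_less[OF I a] pick_less[OF J b] M W
      by (simp add: scalar_prod_def)
    also have "\<dots> = (\<Sum>k\<in>K. M $$ (pick I a, k) * W $$ (k, pick J b))
        + (\<Sum>k\<in>K'. M $$ (pick I a, k) * W $$ (k, pick J b))"
      using part by (simp flip: sum.union_disjoint[OF finite_subset[OF K(1)] finite_subset[OF K(2)]])
    finally show ?thesis
      using index_submatrix_mult[OF M W I K(1) J a b] index_submatrix_mult[OF M W I K(2) J a b]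
        carriers a b
      by simp
  qed
  then show ?thesis
    using carriers by (intro eq_matI) auto
qed

lemma submatrix_minus_mat:
  fixes A B :: "'a :: group_add mat"
  assumes A: "A \<in> carrier_mat m n" and B: "B \<in> carrier_mat m n"
    and I: "I \<subseteq> {0..<m}" and J: "J \<subseteq> {0..<n}"
  shows "submatrix (A - B) I J = submatrix A I J - submatrix B I J"
proof -
  note AB = minus_carrier_mat[OF B, of A]
  note dims = carrier_matD[OF submatrix_carrier_mat[OF AB I J]]
    carrier_matD[OF submatrix_carrier_mat[OF B I J]]
  show ?thesis
  proof (rule eq_matI)
    fix a b assume "a < dim_row (submatrix A I J - submatrix B I J)"
      "b < dim_col (submatrix A I J - submatrix B I J)"
    then have a: "a < card I" and b: "b < card J"
      using dims by simp_all
    show "submatrix (A - B) I J $$ (a,b) = (submatrix A I J - submatrix B I J) $$ (a,b)"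
      unfolding submatrix_index_pick[OF AB I J a b] index_minus_mat(1)[OF a[folded dims(3)] b[folded dims(4)]]
        submatrix_index_pick[OF A I J a b] submatrix_index_pick[OF B I J a b]
      using pick_less[OF I a] pick_less[OF J b] A B by simp
  qed (simp_all add: dims)
qed

lemma submatrix_smult_mat:
  assumes A: "A \<in> carrier_mat m n" and I: "I \<subseteq> {0..<m}" and J: "J \<subseteq> {0..<n}"
  shows "submatrix (c \<cdot>\<^sub>m A) I J = c \<cdot>\<^sub>m submatrix A I J"
proof -
  note cA = smult_carrier_mat[OF A, of c]
  note dims = carrier_matD[OF submatrix_carrier_mat[OF cA I J]]
    carrier_matD[OF submatrix_carrier_mat[OF A I J]]
  show ?thesis
  proof (rule eq_matI)
    fix a b assume "a < dim_row (c \<cdot>\<^sub>m submatrix A I J)" "b < dim_col (c \<cdot>\<^sub>m submatrix A I J)"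
    then have a: "a < card I" and b: "b < card J"
      using dims by simp_all
    show "submatrix (c \<cdot>\<^sub>m A) I J $$ (a,b) = (c \<cdot>\<^sub>m submatrix A I J) $$ (a,b)"
      unfolding submatrix_index_pick[OF cA I J a b] index_smult_mat(1)[OF a[folded dims(3)] b[folded dims(4)]]
        submatrix_index_pick[OF A I J a b]
      using pick_less[OF I a] pick_less[OF J b] A by simp
  qed (simp_all add: dims)
qed

lemma submatrix_one_mat_diag:
  assumes I: "I \<subseteq> {0..<N}"
  shows "submatrix (1\<^sub>m N) I I = (1\<^sub>m (card I) :: 'a :: zero_neq_one mat)"
proof (rule eq_matI)
  fix a b assume "a < dim_row (1\<^sub>m (card I) :: 'a mat)" "b < dim_col (1\<^sub>m (card I) :: 'a mat)"
  then have a: "a < card I" and b: "b < card I" by simp_all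
  have "submatrix (1\<^sub>m N) I I $$ (a,b) = (1\<^sub>m N :: 'a mat) $$ (pick I a, pick I b)"
    by (rule submatrix_index_pick[OF one_carrier_mat I I a b])
  also have "\<dots> = (if a = b then 1 else 0)"
    using pick_less[OF I a] pick_less[OF I b] pick_eq_pick_iff[OF I a b] by simp
  also have "\<dots> = (1\<^sub>m (card I) :: 'a mat) $$ (a,b)"
    using a b by simp
  finally show "submatrix (1\<^sub>m N) I I $$ (a,b) = (1\<^sub>m (card I) :: 'a mat) $$ (a,b)" .
qed (simp_all add: carrier_matD[OF submatrix_carrier_mat[OF one_carrier_mat I I]])

lemma submatrix_one_mat_disjoint:
  assumes I: "I \<subseteq> {0..<N}" and J: "J \<subseteq> {0..<N}" and disj: "I \<inter> J = {}"
  shows "submatrix (1\<^sub>m N) I J = (0\<^sub>m (card I) (card J) :: 'a :: zero_neq_one mat)"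
proof (rule eq_matI)
  fix a b assume "a < dim_row (0\<^sub>m (card I) (card J) :: 'a mat)" "b < dim_col (0\<^sub>m (card I) (card J) :: 'a mat)"
  then have a: "a < card I" and b: "b < card J" by simp_all
  have "pick I a \<in> I" "pick J b \<in> J"
    using a b by (simp_all add: pick_in_set)
  then have "pick I a \<noteq> pick J b"
    using disj by auto
  then have "(1\<^sub>m N :: 'a mat) $$ (pick I a, pick J b) = 0"
    using pick_less[OF I a] pick_less[OF J b] by simp
  then show "submatrix (1\<^sub>m N) I J $$ (a,b) = (0\<^sub>m (card I) (card J) :: 'a mat) $$ (a,b)"
    unfolding submatrix_index_pick[OF one_carrier_mat I J a b] using a b by simp
qed (simp_all add: carrier_matD[OF submatrix_carrier_mat[OF one_carrier_mat I J]])


section \<open>Inverses and their continuity\<close>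

lemma det_char_mat_nonzero:
  fixes A :: "'a :: field mat"
  assumes A: "A \<in> carrier_mat n n" and "\<not> eigenvalue A z"
  shows "det (z \<cdot>\<^sub>m 1\<^sub>m n - A) \<noteq> 0"
proof -
  have "z \<cdot>\<^sub>m 1\<^sub>m n - A = (-1) \<cdot>\<^sub>m char_matrix A z"
    using A by (intro eq_matI) (auto simp: char_matrix_def)
  moreover have "det (char_matrix A z) \<noteq> 0"
    using assms eigenvalue_det[OF A] by simp
  ultimately show ?thesis
    using A by (simp add: char_matrix_def)
qed

lemma minv_inverse:
  assumes M: "M \<in> carrier_mat n n" and "det M \<noteq> 0"
  shows "minv M \<in> carrier_mat n n" "M * minv M = 1\<^sub>m n" "minv M * M = 1\<^sub>m n"
proof -
  have "M \<in> Units (ring_mat TYPE(complex) n undefined)"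
    by (rule det_non_zero_imp_unit[OF M \<open>det M \<noteq> 0\<close>])
  then obtain B where B: "mat_inverse M = Some B"
    by (cases "mat_inverse M") (use mat_inverse(1)[OF M, of undefined] in auto)
  from mat_inverse(2)[OF M B]
  show "minv M \<in> carrier_mat n n" "M * minv M = 1\<^sub>m n" "minv M * M = 1\<^sub>m n"
    unfolding minv_def B by auto
qed

lemma minv_eq_adj_mat:
  assumes M: "M \<in> carrier_mat n n" and det: "det M \<noteq> 0"
  shows "minv M = (1 / det M) \<cdot>\<^sub>m adj_mat M"
proof -
  define Z where "Z = (1 / det M) \<cdot>\<^sub>m adj_mat M"
  have Z: "Z \<in> carrier_mat n n"
    using adj_mat(1)[OF M] by (simp add: Z_def)
  have "M * Z = (1 / det M) \<cdot>\<^sub>m (M * adj_mat M)"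
    unfolding Z_def by (rule mult_smult_distrib[OF M adj_mat(1)[OF M]])
  also have "\<dots> = 1\<^sub>m n"
    unfolding adj_mat(2)[OF M] using det by (intro eq_matI) auto
  finally have MZ: "M * Z = 1\<^sub>m n" .
  note inv = minv_inverse[OF M det]
  have "minv M = minv M * (M * Z)"
    using inv(1) MZ by simp
  also have "\<dots> = (minv M * M) * Z"
    using inv(1) M Z by simp
  also have "\<dots> = Z"
    using inv(3) Z by simp
  finally show ?thesis unfolding Z_def .
qed

definition continuous_mat_on :: "'a :: topological_space set \<Rightarrow> nat \<Rightarrow> nat \<Rightarrow> ('a \<Rightarrow> complex mat) \<Rightarrow> bool"
  where "continuous_mat_on T n m f \<longleftrightarrow>
    (\<forall>z\<in>T. f z \<in> carrier_mat n m) \<and> (\<forall>i<n. \<forall>j<m. continuous_on T (\<lambda>z. f z $$ (i,j)))"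

lemma continuous_mat_on_const: "A \<in> carrier_mat n m \<Longrightarrow> continuous_mat_on T n m (\<lambda>z. A)"
  by (simp add: continuous_mat_on_def)

lemma continuous_mat_on_char_mat:
  assumes "A \<in> carrier_mat n n"
  shows "continuous_mat_on T n n (\<lambda>z. z \<cdot>\<^sub>m 1\<^sub>m n - A)"
proof -
  have "continuous_on T (\<lambda>z. (z \<cdot>\<^sub>m 1\<^sub>m n - A) $$ (i,j))" if "i < n" "j < n" for i j
  proof -
    have "(z \<cdot>\<^sub>m 1\<^sub>m n - A) $$ (i,j) = (if i = j then z else 0) - A $$ (i,j)" for z
      using assms that by simp
    then show ?thesis
      by (cases "i = j") (simp_all add: continuous_intros)
  qed
  moreover have "z \<cdot>\<^sub>m 1\<^sub>m n - A \<in> carrier_mat n n" for z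
    by (rule minus_carrier_mat[OF assms])
  ultimately show ?thesis
    by (simp add: continuous_mat_on_def)
qed

lemma continuous_mat_on_mult:
  assumes f: "continuous_mat_on T n m f" and g: "continuous_mat_on T m k g"
  shows "continuous_mat_on T n k (\<lambda>z. f z * g z)"
proof -
  have "continuous_on T (\<lambda>z. (f z * g z) $$ (i,j))" if ij: "i < n" "j < k" for i j
  proof -
    have cont: "continuous_on T (\<lambda>z. \<Sum>l<m. f z $$ (i,l) * g z $$ (l,j))"
      using f g ij unfolding continuous_mat_on_def by (intro continuous_intros) auto
    have eq: "(f z * g z) $$ (i,j) = (\<Sum>l<m. f z $$ (i,l) * g z $$ (l,j))" if "z \<in> T" for z
    proof -
      have "f z \<in> carrier_mat n m" "g z \<in> carrier_mat m k"
        using f g that unfolding continuous_mat_on_def by auto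
      then show ?thesis
        using ij by (simp add: scalar_prod_def atLeast0LessThan)
    qed
    show ?thesis
      using cont by (rule continuous_on_eq) (simp add: eq)
  qed
  then show ?thesis
    using f g unfolding continuous_mat_on_def by auto
qed

lemma continuous_on_det:
  assumes f: "continuous_mat_on T n n f"
  shows "continuous_on T (\<lambda>z. det (f z))"
proof -
  have cont: "continuous_on T
    (\<lambda>z. \<Sum>p \<in> {p. p permutes {0..<n}}. signof p * (\<Prod>i = 0..<n. f z $$ (i, p i)))"
  proof (intro continuous_intros)
    fix p i assume "p \<in> {p. p permutes {0..<n}}" "i \<in> {0..<n}"
    then have "i < n" "p i < n"
      using permutes_in_image by fastforce+
    then show "continuous_on T (\<lambda>z. f z $$ (i, p i))"
      using f unfolding continuous_mat_on_def by auto
  qed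
  have eq: "det (f z) = (\<Sum>p \<in> {p. p permutes {0..<n}}. signof p * (\<Prod>i = 0..<n. f z $$ (i, p i)))"
    if "z \<in> T" for z
    using f that unfolding continuous_mat_on_def by (auto intro: det_def')
  show ?thesis
    using cont by (rule continuous_on_eq) (simp add: eq)
qed

lemma continuous_mat_on_mat_delete:
  assumes f: "continuous_mat_on T (Suc n) (Suc n) f"
  shows "continuous_mat_on T n n (\<lambda>z. mat_delete (f z) a b)"
proof -
  have "continuous_on T (\<lambda>z. mat_delete (f z) a b $$ (i,j))" if ij: "i < n" "j < n" for i j
  proof -
    define i' where "i' = (if i < a then i else Suc i)"
    define j' where "j' = (if j < b then j else Suc j)"
    have cont: "continuous_on T (\<lambda>z. f z $$ (i', j'))"
      using f ij unfolding continuous_mat_on_def i'_def j'_def by auto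
    have eq: "mat_delete (f z) a b $$ (i,j) = f z $$ (i', j')" if "z \<in> T" for z
      using f ij that unfolding continuous_mat_on_def mat_delete_def i'_def j'_def by auto
    show ?thesis
      using cont by (rule continuous_on_eq) (simp add: eq)
  qed
  moreover have "mat_delete (f z) a b \<in> carrier_mat n n" if "z \<in> T" for z
    using mat_delete_carrier[of "f z" "Suc n" "Suc n" a b] f that
    unfolding continuous_mat_on_def by simp
  ultimately show ?thesis
    by (simp add: continuous_mat_on_def)
qed

lemma continuous_mat_on_minv:
  assumes f: "continuous_mat_on T n n f" and det: "\<forall>z\<in>T. det (f z) \<noteq> 0"
  shows "continuous_mat_on T n n (\<lambda>z. minv (f z))"
proof -
  have "continuous_on T (\<lambda>z. minv (f z) $$ (i,j))" if ij: "i < n" "j < n" for i j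
  proof -
    obtain n' where n: "n = Suc n'"
      using ij by (cases n) auto
    have "continuous_mat_on T (Suc n') (Suc n') f"
      using f n by simp
    then have "continuous_on T (\<lambda>z. det (mat_delete (f z) j i))"
      by (intro continuous_on_det continuous_mat_on_mat_delete)
    then have cont: "continuous_on T
      (\<lambda>z. 1 / det (f z) * ((-1) ^ (j + i) * det (mat_delete (f z) j i)))"
      using det by (intro continuous_intros continuous_on_det[OF f]) auto
    have eq: "minv (f z) $$ (i,j) = 1 / det (f z) * ((-1) ^ (j + i) * det (mat_delete (f z) j i))"
      if "z \<in> T" for z
    proof -
      have "f z \<in> carrier_mat n n"
        using f that unfolding continuous_mat_on_def by blast
      then show ?thesis
        using det that ij by (simp add: minv_eq_adj_mat adj_mat_def cofactor_def)
    qed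
    show ?thesis
      using cont by (rule continuous_on_eq) (simp add: eq)
  qed
  then show ?thesis
    using f det minv_inverse(1) unfolding continuous_mat_on_def by blast
qed

lemma continuous_mat_on_bdd_above_spec_norm:
  assumes f: "continuous_mat_on T n m f" and "compact T"
  shows "bdd_above ((\<lambda>z. spec_norm (f z)) ` T)"
proof -
  define s where "s z = (\<Sum>i<n. \<Sum>j<m. cmod (f z $$ (i,j)))" for z
  have "continuous_on T s"
    using f unfolding continuous_mat_on_def s_def by (intro continuous_intros) auto
  then have "bounded (s ` T)"
    by (intro compact_imp_bounded compact_continuous_image \<open>compact T\<close>)
  then have "bdd_above (s ` T)"
    by (rule bounded_imp_bdd_above)
  then obtain B where B: "\<And>z. z \<in> T \<Longrightarrow> s z \<le> B"
    by (auto simp: bdd_above_def)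
  have "spec_norm (f z) \<le> B" if "z \<in> T" for z
    using spec_norm_le_entry_sum[of "f z"] B[OF that] f that
    unfolding continuous_mat_on_def s_def by auto
  then show ?thesis
    by (intro bdd_aboveI2)
qed

section \<open>Block elimination and the resolvent estimate\<close>

lemma block_elimination:
  assumes B: "B \<in> carrier_mat n n" "det B \<noteq> 0" and D: "D \<in> carrier_mat n' n'" "det D \<noteq> 0"
    and X: "X \<in> carrier_mat n n'" and Y: "Y \<in> carrier_mat n' n"
    and Ws: "Ws \<in> carrier_mat n n" and Wt: "Wt \<in> carrier_mat n' n"
    and row1: "B * Ws + X * Wt = 1\<^sub>m n" and row2: "Y * Ws + D * Wt = 0\<^sub>m n' n"
  shows "Ws = minv B + minv B * (X * minv D * Y) * Ws"
proof -
  note B_inv = minv_inverse[OF B] and D_inv = minv_inverse[OF D]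
  have "minv D * (Y * Ws + D * Wt) = minv D * (Y * Ws) + minv D * D * Wt"
    using mult_add_distrib_mat[OF D_inv(1), of "Y * Ws" n "D * Wt"] D_inv(1) D(1) Y Ws Wt
    by simp
  then have "minv D * (Y * Ws) + Wt = 0\<^sub>m n' n"
    using D_inv(1,3) Wt by (simp add: row2 right_mult_zero_mat)
  then have Wt_eq: "Wt = - (minv D * (Y * Ws))"
    using D_inv(1) Y Ws Wt by (auto simp: mat_eq_iff add_eq_0_iff)
  have XD: "X * minv D \<in> carrier_mat n n'"
    using X D_inv(1) by simp
  have "minv B = minv B * (B * Ws + X * Wt)"
    using B_inv(1) by (simp add: row1)
  also have "\<dots> = minv B * B * Ws + minv B * (X * Wt)"
    using mult_add_distrib_mat[OF B_inv(1), of "B * Ws" n "X * Wt"] B_inv(1) B(1) X Ws Wt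
    by simp
  also have "minv B * B * Ws = Ws"
    using B_inv(3) Ws by simp
  also have "minv B * (X * Wt) = - (minv B * (X * minv D * Y) * Ws)"
  proof -
    have "minv B * (X * minv D * Y) * Ws = minv B * (X * (minv D * (Y * Ws)))"
      using assoc_mult_mat[OF B_inv(1) mult_carrier_mat[OF XD Y] Ws]
        assoc_mult_mat[OF XD Y Ws] assoc_mult_mat[OF X D_inv(1) mult_carrier_mat[OF Y Ws]]
      by simp
    then show ?thesis
      using carrier_matD[OF X] carrier_matD[OF B_inv(1)] carrier_matD[OF D_inv(1)]
      by (simp add: Wt_eq)
  qed
  finally have "minv B = Ws + - (minv B * (X * minv D * Y) * Ws)" .
  then show ?thesis
    using B_inv(1) D_inv(1) X Y Ws by (auto simp: mat_eq_iff)
qed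

lemma submatrix_minv_fixed_point:
  assumes M: "M \<in> carrier_mat N N" "det M \<noteq> 0"
    and part: "S \<union> S' = {0..<N}" "S \<inter> S' = {}"
    and det_B: "det (submatrix M S S) \<noteq> 0" and det_D: "det (submatrix M S' S') \<noteq> 0"
  shows "submatrix (minv M) S S = minv (submatrix M S S)
    + minv (submatrix M S S) * (submatrix M S S' * minv (submatrix M S' S') * submatrix M S' S)
      * submatrix (minv M) S S"
proof -
  have S: "S \<subseteq> {0..<N}" "S' \<subseteq> {0..<N}"
    using part(1) by auto
  note W = minv_inverse[OF M]
  have "submatrix M S S * submatrix (minv M) S S + submatrix M S S' * submatrix (minv M) S' S
      = 1\<^sub>m (card S)"
    using submatrix_mult_split[OF M(1) W(1) part S(1) S(1)] submatrix_one_mat_diag[OF S(1)]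
    unfolding W(2) by metis
  moreover have "submatrix M S' S * submatrix (minv M) S S + submatrix M S' S' * submatrix (minv M) S' S
      = 0\<^sub>m (card S') (card S)"
    using submatrix_mult_split[OF M(1) W(1) part S(2) S(1)] submatrix_one_mat_disjoint[OF S(2) S(1)]
      part(2) Int_commute[of S' S]
    unfolding W(2) by metis
  ultimately show ?thesis
    using submatrix_carrier_mat[OF M(1)] submatrix_carrier_mat[OF W(1)] S det_B det_D
    by (intro block_elimination) auto
qed

lemma spec_norm_fixed_point_perturbation:
  assumes A: "A \<in> carrier_mat n n" and K: "K \<in> carrier_mat n n" and W: "W \<in> carrier_mat n n"
    and fixed_point: "W = A + K * W" and contraction: "spec_norm K \<le> \<theta>" "\<theta> < 1"
  shows "spec_norm (A - W) \<le> spec_norm K * spec_norm A / (1 - \<theta>)"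
proof -
  have "spec_norm W \<le> spec_norm A + spec_norm (K * W)"
    using spec_norm_add[OF A mult_carrier_mat[OF K W]] unfolding fixed_point[symmetric] .
  also have "\<dots> \<le> spec_norm A + \<theta> * spec_norm W"
    using spec_norm_mult[OF K W] contraction(1) spec_norm_nonneg[of W]
    by (simp add: mult_right_mono order_trans)
  finally have W_bound: "spec_norm W \<le> spec_norm A / (1 - \<theta>)"
    using contraction(2) by (simp add: field_simps)
  have "A - W = - (K * W)"
  proof (rule eq_matI)
    fix i j assume "i < dim_row (- (K * W))" "j < dim_col (- (K * W))"
    then have "i < n" "j < n" using K W by simp_all
    moreover have "W $$ (i,j) = (A + K * W) $$ (i,j)"
      by (rule arg_cong[OF fixed_point])
    ultimately show "(A - W) $$ (i,j) = (- (K * W)) $$ (i,j)"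
      using A K W by simp
  qed (use A K W in simp_all)
  then have "spec_norm (A - W) \<le> spec_norm K * spec_norm W"
    using spec_norm_mult[OF K W] by (simp add: spec_norm_uminus)
  also have "\<dots> \<le> spec_norm K * (spec_norm A / (1 - \<theta>))"
    by (intro mult_left_mono W_bound spec_norm_nonneg)
  finally show ?thesis
    by simp
qed

lemma spec_norm_submatrix_swap_le:
  assumes A: "A \<in> carrier_mat N N"
    and hermitian: "\<And>i j. i < N \<Longrightarrow> j < N \<Longrightarrow> A $$ (j,i) = cnj (A $$ (i,j))"
    and S: "S \<subseteq> {0..<N}" "S' \<subseteq> {0..<N}"
  shows "spec_norm (submatrix A S' S) \<le> spec_norm (submatrix A S S')"
proof (rule spec_norm_conj_transpose_le)
  fix i j assume i: "i < card S" and j: "j < card S'"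
  have "submatrix A S' S $$ (j,i) = A $$ (pick S' j, pick S i)"
    by (rule submatrix_index_pick[OF A S(2) S(1) j i])
  also have "\<dots> = cnj (A $$ (pick S i, pick S' j))"
    by (rule hermitian[OF pick_less[OF S(1) i] pick_less[OF S(2) j]])
  also have "A $$ (pick S i, pick S' j) = submatrix A S S' $$ (i,j)"
    by (rule submatrix_index_pick[OF A S(1) S(2) i j, symmetric])
  finally show "submatrix A S' S $$ (j,i) = cnj (submatrix A S S' $$ (i,j))" .
qed (use submatrix_carrier_mat[OF A] S in blast)+

lemma submatrix_resolvent_fixed_point:
  assumes A: "A \<in> carrier_mat N N" and part: "S \<union> S' = {0..<N}" "S \<inter> S' = {}"
    and det: "det (z \<cdot>\<^sub>m 1\<^sub>m N - A) \<noteq> 0"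
      "det (z \<cdot>\<^sub>m 1\<^sub>m (card S) - psub A S) \<noteq> 0" "det (z \<cdot>\<^sub>m 1\<^sub>m (card S') - psub A S') \<noteq> 0"
  shows "psub (minv (z \<cdot>\<^sub>m 1\<^sub>m N - A)) S = minv (z \<cdot>\<^sub>m 1\<^sub>m (card S) - psub A S)
    + minv (z \<cdot>\<^sub>m 1\<^sub>m (card S) - psub A S)
      * (submatrix A S S' * minv (z \<cdot>\<^sub>m 1\<^sub>m (card S') - psub A S') * submatrix A S' S)
      * psub (minv (z \<cdot>\<^sub>m 1\<^sub>m N - A)) S"
proof -
  have S: "S \<subseteq> {0..<N}" "S' \<subseteq> {0..<N}"
    using part(1) by auto
  define M where "M = z \<cdot>\<^sub>m 1\<^sub>m N - A"
  have M: "M \<in> carrier_mat N N"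
    unfolding M_def by (rule minus_carrier_mat[OF A])
  have diag: "submatrix M S S = z \<cdot>\<^sub>m 1\<^sub>m (card S) - psub A S"
    "submatrix M S' S' = z \<cdot>\<^sub>m 1\<^sub>m (card S') - psub A S'"
    unfolding M_def psub_def
    using S by (simp_all add: submatrix_minus_mat[OF _ A] submatrix_smult_mat[OF one_carrier_mat]
      submatrix_one_mat_diag)
  have off_diag: "submatrix M S S' = - submatrix A S S'" "submatrix M S' S = - submatrix A S' S"
    unfolding M_def
    using S part(2) Int_commute[of S' S] submatrix_carrier_mat[OF A S(1) S(2)]
      submatrix_carrier_mat[OF A S(2) S(1)]
    by (auto simp: submatrix_minus_mat[OF _ A] submatrix_smult_mat[OF one_carrier_mat]
      submatrix_one_mat_disjoint mat_eq_iff)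
  have "minv (z \<cdot>\<^sub>m 1\<^sub>m (card S') - psub A S') \<in> carrier_mat (card S') (card S')"
    using submatrix_carrier_mat[OF A S(2) S(2)] det(3)
    by (intro minv_inverse(1)) (auto simp: psub_def)
  then show ?thesis
    using submatrix_minv_fixed_point[OF M det(1)[folded M_def] part] det(2,3) diag off_diag
      carrier_matD[OF submatrix_carrier_mat[OF A S(1) S(2)]]
      carrier_matD[OF submatrix_carrier_mat[OF A S(2) S(1)]]
    by (simp add: M_def psub_def)
qed

lemma resolvent_compression_bound:
  fixes A :: "complex mat" and \<theta> :: real
  assumes A: "A \<in> carrier_mat N N"
    and hermitian: "\<And>i j. i < N \<Longrightarrow> j < N \<Longrightarrow> A $$ (j,i) = cnj (A $$ (i,j))"
    and part: "S \<union> S' = {0..<N}" "S \<inter> S' = {}"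
    and det: "det (z \<cdot>\<^sub>m 1\<^sub>m N - A) \<noteq> 0"
      "det (z \<cdot>\<^sub>m 1\<^sub>m (card S) - psub A S) \<noteq> 0" "det (z \<cdot>\<^sub>m 1\<^sub>m (card S') - psub A S') \<noteq> 0"
    and coupling: "spec_norm (minv (z \<cdot>\<^sub>m 1\<^sub>m (card S) - psub A S) *
        (submatrix A S S' * minv (z \<cdot>\<^sub>m 1\<^sub>m (card S') - psub A S') * submatrix A S' S)) \<le> \<theta>"
      "\<theta> < 1"
  shows "spec_norm (minv (z \<cdot>\<^sub>m 1\<^sub>m (card S) - psub A S) - psub (minv (z \<cdot>\<^sub>m 1\<^sub>m N - A)) S)
    \<le> (spec_norm (submatrix A S S'))\<^sup>2 / (1 - \<theta>)
      * (spec_norm (minv (z \<cdot>\<^sub>m 1\<^sub>m (card S) - psub A S)))\<^sup>2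
      * spec_norm (minv (z \<cdot>\<^sub>m 1\<^sub>m (card S') - psub A S'))"
proof -
  have S: "S \<subseteq> {0..<N}" "S' \<subseteq> {0..<N}"
    using part(1) by auto
  define Bi where "Bi = minv (z \<cdot>\<^sub>m 1\<^sub>m (card S) - psub A S)"
  define Di where "Di = minv (z \<cdot>\<^sub>m 1\<^sub>m (card S') - psub A S')"
  define X where "X = submatrix A S S'"
  define Y where "Y = submatrix A S' S"
  define Ws where "Ws = psub (minv (z \<cdot>\<^sub>m 1\<^sub>m N - A)) S"
  define K where "K = Bi * (X * Di * Y)"
  have X: "X \<in> carrier_mat (card S) (card S')" and Y: "Y \<in> carrier_mat (card S') (card S)"
    unfolding X_def Y_def using submatrix_carrier_mat[OF A] S by blast+
  have Bi: "Bi \<in> carrier_mat (card S) (card S)" and Di: "Di \<in> carrier_mat (card S') (card S')"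
    unfolding Bi_def Di_def psub_def using submatrix_carrier_mat[OF A] S det(2,3)
    by (auto intro!: minv_inverse(1) minus_carrier_mat simp: psub_def)
  have Ws: "Ws \<in> carrier_mat (card S) (card S)"
    unfolding Ws_def psub_def using minv_inverse(1)[OF minus_carrier_mat[OF A] det(1)] S(1)
    by (intro submatrix_carrier_mat) auto
  have XD: "X * Di \<in> carrier_mat (card S) (card S')"
    using X Di by simp
  have "spec_norm (X * Di * Y) \<le> spec_norm (X * Di) * spec_norm Y"
    by (rule spec_norm_mult[OF XD Y])
  also have "\<dots> \<le> spec_norm X * spec_norm Di * spec_norm X"
  proof (intro mult_mono spec_norm_mult[OF X Di])
    show "spec_norm Y \<le> spec_norm X"
      unfolding X_def Y_def by (rule spec_norm_submatrix_swap_le[OF A hermitian S])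
  qed (simp_all add: spec_norm_nonneg)
  finally have "spec_norm K \<le> spec_norm Bi * (spec_norm X * spec_norm Di * spec_norm X)"
    unfolding K_def
    by (intro order_trans[OF spec_norm_mult[OF Bi mult_carrier_mat[OF XD Y]]] mult_left_mono)
      (simp_all add: spec_norm_nonneg)
  then have "spec_norm K * spec_norm Bi / (1 - \<theta>)
      \<le> spec_norm Bi * (spec_norm X * spec_norm Di * spec_norm X) * spec_norm Bi / (1 - \<theta>)"
    using coupling(2) by (intro divide_right_mono mult_right_mono spec_norm_nonneg) simp_all
  also have "\<dots> = (spec_norm X)\<^sup>2 / (1 - \<theta>) * (spec_norm Bi)\<^sup>2 * spec_norm Di"
    by (simp add: power2_eq_square mult_ac)
  finally have bound: "spec_norm K * spec_norm Bi / (1 - \<theta>)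
      \<le> (spec_norm X)\<^sup>2 / (1 - \<theta>) * (spec_norm Bi)\<^sup>2 * spec_norm Di" .
  have "spec_norm (Bi - Ws) \<le> spec_norm K * spec_norm Bi / (1 - \<theta>)"
  proof (rule spec_norm_fixed_point_perturbation[OF Bi _ Ws])
    show "K \<in> carrier_mat (card S) (card S)"
      unfolding K_def using Bi XD Y by simp
    show "Ws = Bi + K * Ws"
      unfolding Ws_def Bi_def K_def X_def Di_def Y_def
      by (rule submatrix_resolvent_fixed_point[OF A part det])
    show "spec_norm K \<le> \<theta>"
      using coupling(1) by (simp add: K_def Bi_def Di_def X_def Y_def)
  qed (rule coupling(2))
  with bound show ?thesis
    unfolding Bi_def Di_def X_def Ws_def by simp
qed

lemma bdd_above_coupling_norm:
  assumes A: "A \<in> carrier_mat N N" and S: "S \<subseteq> {0..<N}" "S' \<subseteq> {0..<N}" and "compact T"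
    and det: "\<forall>z\<in>T. det (z \<cdot>\<^sub>m 1\<^sub>m (card S) - psub A S) \<noteq> 0 \<and>
      det (z \<cdot>\<^sub>m 1\<^sub>m (card S') - psub A S') \<noteq> 0"
  shows "bdd_above ((\<lambda>z. spec_norm (minv (z \<cdot>\<^sub>m 1\<^sub>m (card S) - psub A S) *
      (submatrix A S S' * minv (z \<cdot>\<^sub>m 1\<^sub>m (card S') - psub A S') * submatrix A S' S))) ` T)"
proof (rule continuous_mat_on_bdd_above_spec_norm[OF _ \<open>compact T\<close>])
  have X: "continuous_mat_on T (card S) (card S') (\<lambda>z. submatrix A S S')"
    and Y: "continuous_mat_on T (card S') (card S) (\<lambda>z. submatrix A S' S)"
    using submatrix_carrier_mat[OF A] S by (blast intro: continuous_mat_on_const)+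
  have "psub A S \<in> carrier_mat (card S) (card S)" "psub A S' \<in> carrier_mat (card S') (card S')"
    unfolding psub_def using submatrix_carrier_mat[OF A] S by blast+
  then have B_inv: "continuous_mat_on T (card S) (card S) (\<lambda>z. minv (z \<cdot>\<^sub>m 1\<^sub>m (card S) - psub A S))"
    and D_inv: "continuous_mat_on T (card S') (card S') (\<lambda>z. minv (z \<cdot>\<^sub>m 1\<^sub>m (card S') - psub A S'))"
    using det by (auto intro!: continuous_mat_on_minv continuous_mat_on_char_mat)
  show "continuous_mat_on T (card S) (card S) (\<lambda>z. minv (z \<cdot>\<^sub>m 1\<^sub>m (card S) - psub A S) *
      (submatrix A S S' * minv (z \<cdot>\<^sub>m 1\<^sub>m (card S') - psub A S') * submatrix A S' S))"
    by (intro continuous_mat_on_mult[OF B_inv] continuous_mat_on_mult[OF _ Y] continuous_mat_on_mult[OF X D_inv])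
qed

lemma spd_cmat_carrier_mat: "spd N C \<Longrightarrow> cmat C \<in> carrier_mat N N"
  by (simp add: spd_def cmat_def)

lemma spd_cmat_hermitian:
  assumes "spd N C" "i < N" "j < N"
  shows "cmat C $$ (j,i) = cnj (cmat C $$ (i,j))"
proof -
  have "C \<in> carrier_mat N N" "transpose_mat C = C"
    using assms(1) by (simp_all add: spd_def)
  then have "C $$ (j,i) = C $$ (i,j)"
    using assms(2,3) by (metis index_transpose_mat(1) carrier_matD)
  then show ?thesis
    using assms \<open>C \<in> carrier_mat N N\<close> by (simp add: cmat_def)
qed

theorem lemma4:
  fixes N :: nat and C :: "real mat" and S S' :: "nat set" and \<gamma> :: "real \<Rightarrow> complex"
  assumes spd: "spd N C"
    and part: "S \<union> S' = {0..<N}" "S \<inter> S' = {}" "S \<noteq> {}" "S' \<noteq> {}"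
    and contour: "valid_path \<gamma>" "simple_path \<gamma>" "pathfinish \<gamma> = pathstart \<gamma>"
    and slit: "path_image \<gamma> \<subseteq> - complex_of_real ` {..0}"
    and pos_orient: "\<forall>w \<in> inside (path_image \<gamma>). winding_number \<gamma> w = 1"
    and spec_inside: "\<forall>e. eigenvalue (cmat C) e \<longrightarrow> e \<in> inside (path_image \<gamma>)"
    and avoid: "\<forall>z \<in> path_image \<gamma>. \<not> eigenvalue (cmat C) z \<and>
                   \<not> eigenvalue (psub (cmat C) S) z \<and> \<not> eigenvalue (psub (cmat C) S') z"
    and Theta: "Sup ((\<lambda>z. spec_norm (minv (z \<cdot>\<^sub>m 1\<^sub>m (card S) - psub (cmat C) S) *
                  (submatrix (cmat C) S S' * minv (z \<cdot>\<^sub>m 1\<^sub>m (card S') - psub (cmat C) S') *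
                   submatrix (cmat C) S' S))) ` path_image \<gamma>) < 1"
  shows "\<forall>z \<in> path_image \<gamma>.
     spec_norm (minv (z \<cdot>\<^sub>m 1\<^sub>m (card S) - psub (cmat C) S)
                - psub (minv (z \<cdot>\<^sub>m 1\<^sub>m N - cmat C)) S)
     \<le> (spec_norm (submatrix (cmat C) S S'))\<^sup>2
        / (1 - Sup ((\<lambda>z. spec_norm (minv (z \<cdot>\<^sub>m 1\<^sub>m (card S) - psub (cmat C) S) *
                  (submatrix (cmat C) S S' * minv (z \<cdot>\<^sub>m 1\<^sub>m (card S') - psub (cmat C) S') *
                   submatrix (cmat C) S' S))) ` path_image \<gamma>))
        * (spec_norm (minv (z \<cdot>\<^sub>m 1\<^sub>m (card S) - psub (cmat C) S)))\<^sup>2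
        * spec_norm (minv (z \<cdot>\<^sub>m 1\<^sub>m (card S') - psub (cmat C) S'))"
proof -
  have A: "cmat C \<in> carrier_mat N N"
    using spd by (rule spd_cmat_carrier_mat)
  have S: "S \<subseteq> {0..<N}" "S' \<subseteq> {0..<N}"
    using part(1) by auto
  have "psub (cmat C) S \<in> carrier_mat (card S) (card S)"
    "psub (cmat C) S' \<in> carrier_mat (card S') (card S')"
    unfolding psub_def using submatrix_carrier_mat[OF A] S by blast+
  then have det_path: "\<forall>z\<in>path_image \<gamma>. det (z \<cdot>\<^sub>m 1\<^sub>m (card S) - psub (cmat C) S) \<noteq> 0 \<and>
      det (z \<cdot>\<^sub>m 1\<^sub>m (card S') - psub (cmat C) S') \<noteq> 0"
    using avoid det_char_mat_nonzero by blast
  have bdd: "bdd_above ((\<lambda>z. spec_norm (minv (z \<cdot>\<^sub>m 1\<^sub>m (card S) - psub (cmat C) S) *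
      (submatrix (cmat C) S S' * minv (z \<cdot>\<^sub>m 1\<^sub>m (card S') - psub (cmat C) S') *
       submatrix (cmat C) S' S))) ` path_image \<gamma>)"
    using compact_path_image[OF valid_path_imp_path[OF contour(1)]]
    by (rule bdd_above_coupling_norm[OF A S _ det_path])
  show ?thesis
  proof (intro ballI resolvent_compression_bound[OF A spd_cmat_hermitian[OF spd] part(1,2)]
      det_char_mat_nonzero[OF A] cSup_upper[OF _ bdd] Theta)
  qed (use avoid det_path in auto)
qed

end
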